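(* Let $(a_k)_{k\in\mathbb{Z}}$ be real numbers, all but finitely many zero, $N\ge1$, and let $c:\mathbb{Z}^N\to\mathbb{R}$ be square-summable and $\widetilde S_N$-invariant. Then there exists a sequence $(c_n)_{n\ge1}$ of real-valued, finitely supported, $\widetilde S_N$-invariant functions on $\mathbb{Z}^N$ such that $T_{D_0}c_n\to T_{D_0}c$ in $L^2(\mathbb{Z}^N)$ as $n\to\infty$.
   Context: $\widetilde S_N$ is the group of transformations of $\mathbb{Z}^N$ generated by the coordinate transpositions $\sigma_{i,j}$ ($1\le i,j\le N$) and $\gamma_1(z_1,\dots,z_N)=(-z_1,z_2-z_1,\dots,z_N-z_1)$. For $c:\mathbb{Z}^N\to\mathbb{R}$, the operator $T_{D_0}$ associated with $D_0=\sum_ka_k\partial_k$ is $(T_{D_0}c)(z)=\sum_{k\in\mathbb{Z}}a_k\,c(z-ke)$, where $e=(1,\dots,1)\in\mathbb{Z}^N$. *)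

theory Defs
  imports "HOL-Analysis.Analysis"
begin

text \<open>Points of Z^N are integer lists of length N; coordinate i (1-based in the paper)
  is list index i-1.\<close>

definition lattice :: "nat \<Rightarrow> int list set" where
  "lattice N = {z. length z = N}"

definition coord_swap :: "nat \<Rightarrow> nat \<Rightarrow> int list \<Rightarrow> int list" where
  "coord_swap i j z = z[i := z ! j, j := z ! i]"

definition gamma1 :: "int list \<Rightarrow> int list" where
  "gamma1 z = (case z of [] \<Rightarrow> [] | z1 # zs \<Rightarrow> (- z1) # map (\<lambda>x. x - z1) zs)"

text \<open>The group tilde S_N: generated by the transpositions and gamma1 (all are involutions,
  so the closure of the identity under left composition with generators is the group).\<close>
inductive_set tSN :: "nat \<Rightarrow> (int list \<Rightarrow> int list) set" for N where
  tSN_id: "id \<in> tSN N"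
| tSN_swap: "g \<in> tSN N \<Longrightarrow> i < N \<Longrightarrow> j < N \<Longrightarrow> coord_swap i j \<circ> g \<in> tSN N"
| tSN_gamma: "g \<in> tSN N \<Longrightarrow> gamma1 \<circ> g \<in> tSN N"

definition tSN_invariant :: "nat \<Rightarrow> (int list \<Rightarrow> real) \<Rightarrow> bool" where
  "tSN_invariant N c \<longleftrightarrow> (\<forall>g\<in>tSN N. \<forall>z\<in>lattice N. c (g z) = c z)"

definition TD0 :: "(int \<Rightarrow> real) \<Rightarrow> (int list \<Rightarrow> real) \<Rightarrow> int list \<Rightarrow> real" where
  "TD0 a c z = (\<Sum>k\<in>{k. a k \<noteq> 0}. a k * c (map (\<lambda>x. x - k) z))"

end

theory Submission
  imports Defs
begin

text \<open>The spread of z, i.e. the diameter of the set of values {0, z_1, ..., z_N}, is preserved by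
  every generator of tilde S_N: a transposition permutes the values and gamma1 translates them by
  -z_1. Truncating c to the finitely many points of spread at most n therefore keeps it invariant,
  and the truncation error tends to 0 in l^2. Since T_D0 is a finite combination of
  translations, it is a bounded operator on l^2(Z^N), which carries this convergence over.\<close>

definition spread :: "int list \<Rightarrow> int" where
  "spread z = Max (set (0 # z)) - Min (set (0 # z))"

lemma Max_minus_Min_translate:
  fixes S :: "'a::linordered_ab_group_add set"
  assumes "finite S" "S \<noteq> {}"
  shows "Max ((\<lambda>x. x - t) ` S) - Min ((\<lambda>x. x - t) ` S) = Max S - Min S"
  using Max_add_commute[OF assms, of "\<lambda>x. x" "- t"] Min_add_commute[OF assms, of "\<lambda>x. x" "- t"]
  by simp

lemma spread_gamma1: "spread (gamma1 z) = spread z"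
proof (cases z)
  case (Cons z1 zs)
  then have "set (0 # gamma1 z) = (\<lambda>x. x - z1) ` set (0 # z)"
    by (auto simp: gamma1_def)
  then show ?thesis
    unfolding spread_def using Max_minus_Min_translate[of "set (0 # z)" z1] by simp
qed (simp add: gamma1_def)

lemma spread_coord_swap: "i < length z \<Longrightarrow> j < length z \<Longrightarrow> spread (coord_swap i j z) = spread z"
  by (simp add: spread_def coord_swap_def set_swap)

lemma length_gamma1 [simp]: "length (gamma1 z) = length z"
  by (cases z) (simp_all add: gamma1_def)

lemma tSN_preserves_length_spread:
  assumes "g \<in> tSN N" "length z = N"
  shows "length (g z) = N \<and> spread (g z) = spread z"
  using assms
proof (induction g rule: tSN.induct)
  case (tSN_swap g i j)
  then show ?case using spread_coord_swap[of i "g z" j] by (simp add: coord_swap_def)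
qed (simp_all add: spread_gamma1)

lemma abs_le_spread:
  assumes "x \<in> set z"
  shows "\<bar>x\<bar> \<le> spread z"
proof -
  have "x \<le> Max (set (0 # z))" "Min (set (0 # z)) \<le> x"
    "0 \<le> Max (set (0 # z))" "Min (set (0 # z)) \<le> 0"
    using assms by simp_all
  then show ?thesis unfolding spread_def by linarith
qed

lemma finite_spread_le: "finite {z \<in> lattice N. spread z \<le> n}"
proof (rule finite_subset)
  show "{z \<in> lattice N. spread z \<le> n} \<subseteq> {xs. set xs \<subseteq> {-n..n} \<and> length xs = N}"
    using abs_le_spread unfolding lattice_def by fastforce
qed (rule finite_lists_length_eq, simp)

definition trunc_spread :: "nat \<Rightarrow> (int list \<Rightarrow> real) \<Rightarrow> int list \<Rightarrow> real" where
  "trunc_spread n c z = (if spread z \<le> int n then c z else 0)"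

lemma finite_support_trunc_spread: "finite {z \<in> lattice N. trunc_spread n c z \<noteq> 0}"
  by (rule finite_subset[OF _ finite_spread_le[of N "int n"]]) (auto simp: trunc_spread_def)

lemma tSN_invariant_trunc_spread:
  assumes "tSN_invariant N c"
  shows "tSN_invariant N (trunc_spread n c)"
  unfolding tSN_invariant_def
proof (intro ballI)
  fix g z assume "g \<in> tSN N" "z \<in> lattice N"
  moreover from this have "spread (g z) = spread z"
    using tSN_preserves_length_spread by (simp add: lattice_def)
  ultimately show "trunc_spread n c (g z) = trunc_spread n c z"
    using assms by (simp add: tSN_invariant_def trunc_spread_def)
qed

lemma tendsto_infsum_Diff_incseq:
  fixes f :: "'a \<Rightarrow> real"
  assumes summable: "f summable_on A" and nonneg: "\<And>x. x \<in> A \<Longrightarrow> f x \<ge> 0"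
    and "incseq B" and cover: "A \<subseteq> (\<Union>n. B n)"
  shows "(\<lambda>n. \<Sum>\<^sub>\<infinity>x\<in>A - B n. f x) \<longlonglongrightarrow> 0"
proof (rule LIMSEQ_I)
  fix r :: real assume "r > 0"
  then obtain F where F: "finite F" "F \<subseteq> A" "dist (sum f F) (infsum f A) \<le> r / 2"
    using infsum_finite_approximation[OF summable, of "r / 2"] by auto
  obtain m where m: "\<And>x. x \<in> F \<Longrightarrow> x \<in> B (m x)"
    using F(2) cover by (metis UN_iff subsetD)
  define n0 where "n0 = Max (insert 0 (m ` F))"
  have "norm (\<Sum>\<^sub>\<infinity>x\<in>A - B n. f x) < r" if "n \<ge> n0" for n
  proof -
    have "F \<subseteq> B n"
    proof
      fix x assume "x \<in> F"
      then have "m x \<le> n" using F(1) \<open>n \<ge> n0\<close> unfolding n0_def by (simp add: Max_ge_iff)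
      then show "x \<in> B n" using m[OF \<open>x \<in> F\<close>] \<open>incseq B\<close> by (auto simp: incseq_def)
    qed
    have "0 \<le> (\<Sum>\<^sub>\<infinity>x\<in>A - B n. f x)" by (rule infsum_nonneg) (simp add: nonneg)
    moreover have "(\<Sum>\<^sub>\<infinity>x\<in>A - B n. f x) \<le> (\<Sum>\<^sub>\<infinity>x\<in>A - F. f x)"
      using \<open>F \<subseteq> B n\<close> by (intro infsum_mono2 summable_on_subset[OF summable]) (auto simp: nonneg)
    moreover have "(\<Sum>\<^sub>\<infinity>x\<in>A - F. f x) = infsum f A - sum f F"
      using F(1,2) summable by (simp add: infsum_Diff)
    ultimately show ?thesis using F(3) \<open>r > 0\<close> by (simp add: dist_real_def)
  qed
  then show "\<exists>n0. \<forall>n\<ge>n0. norm ((\<Sum>\<^sub>\<infinity>x\<in>A - B n. f x) - 0) < r" by auto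
qed

lemma tendsto_trunc_spread_l2:
  assumes "(\<lambda>z. (c z)\<^sup>2) summable_on lattice N"
  shows "(\<lambda>n. \<Sum>\<^sub>\<infinity>z\<in>lattice N. (trunc_spread n c z - c z)\<^sup>2) \<longlonglongrightarrow> 0"
proof -
  define B where "B n = {z. spread z \<le> int n}" for n
  have "incseq B" by (auto simp: incseq_def B_def)
  moreover have "lattice N \<subseteq> (\<Union>n. B n)"
  proof
    fix z
    have "z \<in> B (nat (spread z))" unfolding B_def by simp
    then show "z \<in> (\<Union>n. B n)" by blast
  qed
  ultimately have "(\<lambda>n. \<Sum>\<^sub>\<infinity>z\<in>lattice N - B n. (c z)\<^sup>2) \<longlonglongrightarrow> 0"
    using assms by (intro tendsto_infsum_Diff_incseq) auto
  moreover have "(\<Sum>\<^sub>\<infinity>z\<in>lattice N. (trunc_spread n c z - c z)\<^sup>2) = (\<Sum>\<^sub>\<infinity>z\<in>lattice N - B n. (c z)\<^sup>2)"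
    for n by (rule infsum_cong_neutral) (auto simp: B_def trunc_spread_def)
  ultimately show ?thesis by simp
qed

lemma has_sum_finite_sum:
  fixes f :: "'k \<Rightarrow> 'a \<Rightarrow> 'b::topological_comm_monoid_add"
  assumes "finite K" "\<And>k. k \<in> K \<Longrightarrow> (f k has_sum s k) A"
  shows "((\<lambda>x. \<Sum>k\<in>K. f k x) has_sum (\<Sum>k\<in>K. s k)) A"
  using assms by (induction K rule: finite_induct) (auto intro: has_sum_add)

lemma bij_betw_lattice_shift: "bij_betw (map (\<lambda>x. x - k)) (lattice N) (lattice N)"
  by (rule bij_betw_byWitness[where f' = "map (\<lambda>x. x + k)"]) (auto simp: lattice_def map_idI)

lemma has_sum_lattice_shift:
  "(f has_sum s) (lattice N) \<Longrightarrow> ((\<lambda>z. f (map (\<lambda>x. x - k) z)) has_sum s) (lattice N)"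
  by (simp add: has_sum_reindex_bij_betw[OF bij_betw_lattice_shift])

lemma TD0_diff: "TD0 a c z - TD0 a d z = TD0 a (\<lambda>w. c w - d w) z"
  by (simp add: TD0_def sum_subtractf right_diff_distrib)

lemma TD0_l2_bound:
  fixes a :: "int \<Rightarrow> real" and d :: "int list \<Rightarrow> real"
  assumes fin: "finite {k. a k \<noteq> 0}" and summable: "(\<lambda>z. (d z)\<^sup>2) summable_on lattice N"
  defines "C \<equiv> (\<Sum>k | a k \<noteq> 0. (a k)\<^sup>2) * card {k. a k \<noteq> 0}"
  shows "(\<lambda>z. (TD0 a d z)\<^sup>2) summable_on lattice N"
    and "(\<Sum>\<^sub>\<infinity>z\<in>lattice N. (TD0 a d z)\<^sup>2) \<le> C * (\<Sum>\<^sub>\<infinity>z\<in>lattice N. (d z)\<^sup>2)"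
proof -
  define K where "K = {k. a k \<noteq> 0}"
  let ?S = "\<Sum>\<^sub>\<infinity>z\<in>lattice N. (d z)\<^sup>2"
  define G where "G z = (\<Sum>k\<in>K. (a k)\<^sup>2) * (\<Sum>k\<in>K. (d (map (\<lambda>x. x - k) z))\<^sup>2)" for z
  have "((\<lambda>z. (d z)\<^sup>2) has_sum ?S) (lattice N)"
    using summable by (rule has_sum_infsum)
  then have "((\<lambda>z. \<Sum>k\<in>K. (d (map (\<lambda>x. x - k) z))\<^sup>2) has_sum (\<Sum>k\<in>K. ?S)) (lattice N)"
    using fin by (intro has_sum_finite_sum has_sum_lattice_shift) (simp_all add: K_def)
  from has_sum_cmult_right[OF this, of "\<Sum>k\<in>K. (a k)\<^sup>2"]
  have G_has_sum: "(G has_sum C * ?S) (lattice N)"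
    unfolding G_def C_def K_def[symmetric] by (simp add: mult.assoc)
  have TD0_le_G: "(TD0 a d z)\<^sup>2 \<le> G z" for z
    unfolding TD0_def G_def K_def[symmetric] by (rule Cauchy_Schwarz_ineq_sum)
  have "G summable_on lattice N"
    using G_has_sum unfolding summable_on_def by blast
  then show summable_TD0: "(\<lambda>z. (TD0 a d z)\<^sup>2) summable_on lattice N"
    by (rule summable_on_comparison_test) (simp_all add: TD0_le_G)
  show "(\<Sum>\<^sub>\<infinity>z\<in>lattice N. (TD0 a d z)\<^sup>2) \<le> C * ?S"
    using has_sum_infsum[OF summable_TD0] G_has_sum TD0_le_G
    by (rule has_sum_mono)
qed

theorem lemma5p1:
  fixes a :: "int \<Rightarrow> real" and N :: nat and c :: "int list \<Rightarrow> real"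
  assumes "finite {k. a k \<noteq> 0}"
    and "N \<ge> 1"
    and "(\<lambda>z. (c z)\<^sup>2) summable_on lattice N"
    and "tSN_invariant N c"
  shows "\<exists>cs :: nat \<Rightarrow> int list \<Rightarrow> real.
           (\<forall>n. finite {z \<in> lattice N. cs n z \<noteq> 0} \<and> tSN_invariant N (cs n)
                \<and> (\<lambda>z. (TD0 a (cs n) z - TD0 a c z)\<^sup>2) summable_on lattice N)
         \<and> (\<lambda>n. sqrt (\<Sum>\<^sub>\<infinity>z\<in>lattice N. (TD0 a (cs n) z - TD0 a c z)\<^sup>2)) \<longlonglongrightarrow> 0"
proof -
  define C where "C = (\<Sum>k | a k \<noteq> 0. (a k)\<^sup>2) * card {k. a k \<noteq> 0}"
  define err where "err n = (\<Sum>\<^sub>\<infinity>z\<in>lattice N. (trunc_spread n c z - c z)\<^sup>2)" for n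
  have err_summable: "(\<lambda>z. (trunc_spread n c z - c z)\<^sup>2) summable_on lattice N" for n
    by (rule summable_on_comparison_test[OF assms(3)]) (auto simp: trunc_spread_def)
  define E where "E n = (\<Sum>\<^sub>\<infinity>z\<in>lattice N. (TD0 a (trunc_spread n c) z - TD0 a c z)\<^sup>2)" for n
  note bound = TD0_l2_bound[OF assms(1) err_summable, folded C_def err_def TD0_diff]
  have "(\<lambda>n. sqrt (C * err n)) \<longlonglongrightarrow> sqrt (C * 0)"
    unfolding err_def by (intro tendsto_intros tendsto_trunc_spread_l2 assms(3))
  moreover have "0 \<le> sqrt (E n)" for n
    unfolding E_def by (simp add: infsum_nonneg)
  moreover have "sqrt (E n) \<le> sqrt (C * err n)" for n
    using bound(2)[of n] unfolding E_def by (rule real_sqrt_le_mono)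
  ultimately have "(\<lambda>n. sqrt (E n)) \<longlonglongrightarrow> 0"
    using tendsto_sandwich[of "\<lambda>_. 0" "\<lambda>n. sqrt (E n)" sequentially "\<lambda>n. sqrt (C * err n)" 0]
    by simp
  then show ?thesis
    unfolding E_def
    by (intro exI[of _ "\<lambda>n. trunc_spread n c"] conjI allI finite_support_trunc_spread
        tSN_invariant_trunc_spread assms(4) bound(1))
qed

end
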